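(* Let $k$ be a field with $1/2\in k$, $R$ the local ring of ${\mathbb A}^1_k=\mathrm{Spec}\,k[t]$ at $t=0$, and $\mathfrak m=tR$. There is a well-defined group homomorphism $$\rho:K_2(R,\mathfrak m^2)\to \mathfrak m^2\Omega^1_{R/k}/\mathfrak m^3\Omega^1_{R/k}$$ determined on generators by $\rho\langle a,b\rangle=-a\,db$ if $a\in\mathfrak m^2$, $b\in R$, and $\rho\langle a,b\rangle=b\,da$ if $b\in\mathfrak m^2$, $a\in R$. Moreover $\rho$ is nonzero; e.g. $\rho\langle t^2,t\rangle=-t^2dt\neq 0$.
   Context: $\Omega^1_{R/k}$ is the module of K\"ahler differentials of $R$ over $k$; the target $\mathfrak m^2\Omega^1_{R/k}/\mathfrak m^3\Omega^1_{R/k}$ is a one-dimensional $k$-vector space with basis the class of $t^2dt$ (the paper identifies it with $\mathfrak m^3/\mathfrak m^4$). $K_2(R,\mathfrak m^2)$ is relative $K_2$; for $(a,b)\in(R\times\mathfrak m^2)\cup(\mathfrak m^2\times R)$, $\langle a,b\rangle$ is the Dennis–Stein (pointy bracket) symbol. $K_2(R,\mathfrak m^2)$ has the presentation: generators $\langle a,b\rangle$ for such pairs, relations $\langle a,b\rangle=-\langle b,a\rangle$ ($a\in\mathfrak m^2$); $\langle a,b\rangle+\langle a,c\rangle=\langle a,b+c-abc\rangle$ ($a\in\mathfrak m^2$, or $b,c\in\mathfrak m^2$); $\langle a,bc\rangle=\langle ab,c\rangle+\langle ac,b\rangle$ ($a\in\mathfrak m^2$). *)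

theory Defs
  imports "HOL-Algebra.Free_Abelian_Groups" "HOL-Algebra.Generated_Groups" "HOL-Algebra.Coset"
    "HOL-Computational_Algebra.Polynomial_FPS"
begin

text \<open>The local ring R of the affine line at t = 0, realised inside k[[t]]
  (its completion, into which it embeds): elements p/q with q(0) nonzero.\<close>
definition Rloc :: "'k::field fps set" where
  "Rloc = {fps_of_poly p * inverse (fps_of_poly q) | p q. poly q 0 \<noteq> 0}"

definition mpow :: "nat \<Rightarrow> 'k::field fps set" where
  "mpow n = {fps_X ^ n * r | r. r \<in> Rloc}"

text \<open>Kaehler differentials: Omega^1_{R/k} = R dt, a differential x dt being
  represented by its coefficient x; the differential is d b = b' dt.\<close>
definition dR :: "'k::field fps \<Rightarrow> 'k fps" where
  "dR b = fps_deriv b"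

definition OmG :: "'k::field fps monoid" where
  "OmG = \<lparr>carrier = mpow 2, monoid.mult = (+), one = 0\<rparr>"

definition OmQ :: "'k::field fps set monoid" where
  "OmQ = OmG Mod mpow 3"

definition omcls :: "'k::field fps \<Rightarrow> 'k fps set" where
  "omcls x = mpow 3 #>\<^bsub>OmG\<^esub> x"

definition DSgens :: "('k::field fps \<times> 'k fps) set" where
  "DSgens = {(a, b). (a \<in> Rloc \<and> b \<in> mpow 2) \<or> (a \<in> mpow 2 \<and> b \<in> Rloc)}"

definition FK :: "('k::field fps \<times> 'k fps \<Rightarrow>\<^sub>0 int) monoid" where
  "FK = free_Abelian_group DSgens"

definition DSrels :: "('k::field fps \<times> 'k fps \<Rightarrow>\<^sub>0 int) set" where
  "DSrels =
     {frag_of (a, b) + frag_of (b, a) | a b. a \<in> mpow 2 \<and> b \<in> Rloc}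
   \<union> {frag_of (a, b) + frag_of (a, c) - frag_of (a, b + c - a * b * c) | a b c.
        (a \<in> mpow 2 \<and> b \<in> Rloc \<and> c \<in> Rloc) \<or> (a \<in> Rloc \<and> b \<in> mpow 2 \<and> c \<in> mpow 2)}
   \<union> {frag_of (a, b * c) - frag_of (a * b, c) - frag_of (a * c, b) | a b c.
        a \<in> mpow 2 \<and> b \<in> Rloc \<and> c \<in> Rloc}"

definition K2rel :: "('k::field fps \<times> 'k fps \<Rightarrow>\<^sub>0 int) set monoid" where
  "K2rel = FK Mod generate FK DSrels"

definition DS :: "'k::field fps \<Rightarrow> 'k fps \<Rightarrow> ('k fps \<times> 'k fps \<Rightarrow>\<^sub>0 int) set" where
  "DS a b = generate FK DSrels #>\<^bsub>FK\<^esub> frag_of (a, b)"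

end

theory Submission
  imports Defs
begin

(* Where both
   prescriptions apply (a and b in m^2) they differ by a db + b da, which lies in m^3 Omega
   because d(m^2) is contained in m. By the universal property of the free abelian group this
   extends to formal sums, and every defining relation lands in m^3 Omega: the Leibniz relation
   goes to 0 by the product rule, skew-symmetry to -(a db + b da) or 0, and additivity to
   -a d(abc) or abc da. Hence the map factors through K_2(R, m^2). Finally -t^2 dt is not in
   m^3 Omega, as its t^2-coefficient is -1. *)

unbundle fps_syntax

lemma fps_fraction_in_Rloc:
  "poly q 0 \<noteq> 0 \<Longrightarrow> fps_of_poly p * inverse (fps_of_poly q) \<in> Rloc"
  unfolding Rloc_def by blast

lemma RlocE:
  assumes "x \<in> Rloc"
  obtains p q :: "'k::field poly"
  where "poly q 0 \<noteq> 0" "x = fps_of_poly p * inverse (fps_of_poly q)"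
  using assms unfolding Rloc_def by blast

lemma fps_of_poly_mult_inverse:
  "poly q 0 \<noteq> 0 \<Longrightarrow> fps_of_poly q * inverse (fps_of_poly q) = (1 :: 'k::field fps)"
  by (simp add: inverse_mult_eq_1' poly_0_coeff_0)

lemma fps_of_poly_in_Rloc: "fps_of_poly p \<in> (Rloc :: 'k::field fps set)"
  using fps_fraction_in_Rloc[of "1::'k poly" p] by simp

lemma fps_const_in_Rloc: "fps_const c \<in> (Rloc :: 'k::field fps set)"
  using fps_of_poly_in_Rloc[of "[:c:]"] by (simp add: fps_of_poly_const)

lemma fps_X_in_Rloc: "fps_X \<in> (Rloc :: 'k::field fps set)"
  using fps_of_poly_in_Rloc[of "[:0, 1:]"] by simp

lemma Rloc_mult:
  assumes "x \<in> Rloc" "y \<in> Rloc"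
  shows "x * y \<in> (Rloc :: 'k::field fps set)"
proof -
  obtain p q where x: "poly q 0 \<noteq> 0" "x = fps_of_poly p * inverse (fps_of_poly q)"
    using assms(1) by (rule RlocE)
  obtain p' q' where y: "poly q' 0 \<noteq> 0" "y = fps_of_poly p' * inverse (fps_of_poly q')"
    using assms(2) by (rule RlocE)
  have "x * y = fps_of_poly (p * p') * inverse (fps_of_poly (q * q'))"
    by (simp add: x y fps_of_poly_mult fps_inverse_mult mult_ac)
  then show ?thesis
    using x y fps_fraction_in_Rloc[of "q * q'"] by simp
qed

lemma Rloc_add:
  assumes "x \<in> Rloc" "y \<in> Rloc"
  shows "x + y \<in> (Rloc :: 'k::field fps set)"
proof -
  obtain p q where x: "poly q 0 \<noteq> 0" "x = fps_of_poly p * inverse (fps_of_poly q)"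
    using assms(1) by (rule RlocE)
  obtain p' q' where y: "poly q' 0 \<noteq> 0" "y = fps_of_poly p' * inverse (fps_of_poly q')"
    using assms(2) by (rule RlocE)
  have "x + y = fps_of_poly (p * q' + p' * q) * inverse (fps_of_poly (q * q'))"
    using fps_of_poly_mult_inverse[OF x(1)] fps_of_poly_mult_inverse[OF y(1)]
    by (simp add: x y fps_of_poly_mult fps_of_poly_add fps_inverse_mult algebra_simps)
  then show ?thesis
    using x y fps_fraction_in_Rloc[of "q * q'"] by simp
qed

lemma Rloc_uminus: "x \<in> Rloc \<Longrightarrow> - x \<in> (Rloc :: 'k::field fps set)"
  using Rloc_mult[OF fps_const_in_Rloc[of "-1"]] by (simp flip: fps_const_neg)

lemma Rloc_diff: "x \<in> Rloc \<Longrightarrow> y \<in> Rloc \<Longrightarrow> x - y \<in> (Rloc :: 'k::field fps set)"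
  using Rloc_add[OF _ Rloc_uminus] by fastforce

lemma fps_deriv_in_Rloc:
  assumes "x \<in> Rloc"
  shows "fps_deriv x \<in> (Rloc :: 'k::field fps set)"
proof -
  obtain p q where x: "poly q 0 \<noteq> 0" "x = fps_of_poly p * inverse (fps_of_poly q)"
    using assms by (rule RlocE)
  let ?Q = "inverse (fps_of_poly q)"
  have "fps_deriv x = fps_of_poly (pderiv p) * ?Q - fps_of_poly p * (fps_of_poly (pderiv q) * (?Q * ?Q))"
    using x by (simp add: fps_inverse_deriv poly_0_coeff_0 fps_of_poly_pderiv power2_eq_square algebra_simps)
  moreover have "?Q \<in> Rloc"
    using fps_fraction_in_Rloc[OF x(1), of 1] by simp
  ultimately show ?thesis
    by (simp add: Rloc_diff Rloc_mult fps_of_poly_in_Rloc)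
qed

lemma mpowI: "r \<in> Rloc \<Longrightarrow> fps_X ^ n * r \<in> mpow n"
  unfolding mpow_def by blast

lemma mpowE:
  assumes "x \<in> mpow n"
  obtains r where "r \<in> Rloc" "x = fps_X ^ n * r"
  using assms unfolding mpow_def by blast

lemma fps_X_power_in_mpow: "fps_X ^ n \<in> (mpow n :: 'k::field fps set)"
  using mpowI[OF fps_const_in_Rloc[of 1]] by simp

lemma mpow_subset_Rloc: "mpow n \<subseteq> (Rloc :: 'k::field fps set)"
proof
  fix x :: "'k fps"
  assume "x \<in> mpow n"
  then obtain r where "r \<in> Rloc" "x = fps_X ^ n * r"
    by (rule mpowE)
  moreover have "fps_X ^ n \<in> (Rloc :: 'k fps set)"
    by (induction n) (simp_all add: Rloc_mult fps_X_in_Rloc fps_const_in_Rloc[of 1, simplified])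
  ultimately show "x \<in> Rloc"
    by (simp add: Rloc_mult)
qed

lemma mpow_mult_Rloc:
  assumes "x \<in> mpow n" "r \<in> Rloc"
  shows "x * r \<in> mpow n"
proof -
  obtain s where "s \<in> Rloc" "x = fps_X ^ n * s"
    using assms(1) by (rule mpowE)
  then show ?thesis
    using mpowI[OF Rloc_mult[OF _ assms(2)]] by (simp add: mult.assoc)
qed

lemma mpow_mult: "x \<in> mpow m \<Longrightarrow> y \<in> mpow n \<Longrightarrow> x * y \<in> (mpow (m + n) :: 'k::field fps set)"
proof -
  assume "x \<in> mpow m" "y \<in> mpow n"
  then obtain r s where "r \<in> Rloc" "s \<in> Rloc" "x = fps_X ^ m * r" "y = fps_X ^ n * s"
    by (auto elim!: mpowE)
  then show ?thesis
    using mpowI[OF Rloc_mult, of r s "m + n"] by (simp add: power_add mult_ac)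
qed

lemma mpow_antimono: "m \<le> n \<Longrightarrow> mpow n \<subseteq> (mpow m :: 'k::field fps set)"
proof
  fix x :: "'k fps"
  assume "m \<le> n" "x \<in> mpow n"
  then obtain r where "r \<in> Rloc" "x = fps_X ^ m * (fps_X ^ (n - m) * r)"
    by (auto elim: mpowE simp: mult.assoc simp flip: power_add)
  then show "x \<in> mpow m"
    using mpowI mpow_mult_Rloc[OF fps_X_power_in_mpow] mpow_subset_Rloc by blast
qed

lemma zero_in_mpow: "0 \<in> (mpow n :: 'k::field fps set)"
  using mpowI[OF fps_const_in_Rloc[of 0]] by simp

lemma mpow_add: "x \<in> mpow n \<Longrightarrow> y \<in> mpow n \<Longrightarrow> x + y \<in> (mpow n :: 'k::field fps set)"
  by (auto elim!: mpowE simp flip: distrib_left simp: mpowI Rloc_add)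

lemma mpow_uminus: "x \<in> mpow n \<Longrightarrow> - x \<in> (mpow n :: 'k::field fps set)"
  by (auto elim!: mpowE intro: mpowI[OF Rloc_uminus, simplified])

lemma mpow_diff: "x \<in> mpow n \<Longrightarrow> y \<in> mpow n \<Longrightarrow> x - y \<in> (mpow n :: 'k::field fps set)"
  using mpow_add[OF _ mpow_uminus] by fastforce

lemma fps_nth_mpow: "x \<in> mpow n \<Longrightarrow> i < n \<Longrightarrow> x $ i = 0"
  by (auto elim!: mpowE simp: fps_X_power_mult_nth)

lemma fps_deriv_mpow_Suc:
  assumes "x \<in> mpow (Suc n)"
  shows "fps_deriv x \<in> (mpow n :: 'k::field fps set)"
proof -
  obtain r where r: "r \<in> Rloc" "x = fps_X ^ Suc n * r"
    using assms by (rule mpowE)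
  have deriv_X_power: "fps_deriv (fps_X ^ Suc n) = fps_const (of_nat (Suc n)) * (fps_X ^ n :: 'k fps)"
    by (simp only: fps_deriv_power fps_deriv_fps_X diff_Suc_1 mult_1_right)
  have "fps_deriv x = fps_deriv (fps_X ^ Suc n) * r + fps_X ^ Suc n * fps_deriv r"
    by (simp only: r(2) fps_deriv_mult add.commute)
  also have "\<dots> = fps_X ^ n * (fps_const (of_nat (Suc n)) * r + fps_X * fps_deriv r)"
    unfolding deriv_X_power by (simp add: algebra_simps)
  finally have "fps_deriv x = fps_X ^ n * (fps_const (of_nat (Suc n)) * r + fps_X * fps_deriv r)" .
  then show ?thesis
    using r by (simp add: mpowI Rloc_add Rloc_mult fps_const_in_Rloc fps_X_in_Rloc fps_deriv_in_Rloc)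
qed

lemma mult_fps_deriv_in_mpow:
  "x \<in> mpow m \<Longrightarrow> y \<in> mpow (Suc n) \<Longrightarrow> x * fps_deriv y \<in> (mpow (m + n) :: 'k::field fps set)"
  by (simp add: mpow_mult fps_deriv_mpow_Suc)

lemma mpow_mult_fps_deriv_Rloc: "x \<in> mpow n \<Longrightarrow> y \<in> Rloc \<Longrightarrow> x * fps_deriv y \<in> (mpow n :: 'k::field fps set)"
  by (simp add: mpow_mult_Rloc fps_deriv_in_Rloc)

lemma mpow2_mult_fps_deriv_mpow2:
  "x \<in> mpow 2 \<Longrightarrow> y \<in> mpow 2 \<Longrightarrow> x * fps_deriv y \<in> (mpow 3 :: 'k::field fps set)"
  using mult_fps_deriv_in_mpow[of x 2 y 1] by (simp add: numeral_2_eq_2 numeral_3_eq_3)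

lemma Rloc_dennis_stein_sum:
  "a \<in> Rloc \<Longrightarrow> b \<in> Rloc \<Longrightarrow> c \<in> Rloc \<Longrightarrow> b + c - a * b * c \<in> (Rloc :: 'k::field fps set)"
  by (simp add: Rloc_add Rloc_diff Rloc_mult)

lemma mpow_dennis_stein_sum:
  "a \<in> Rloc \<Longrightarrow> b \<in> mpow n \<Longrightarrow> c \<in> mpow n \<Longrightarrow> b + c - a * b * c \<in> (mpow n :: 'k::field fps set)"
  by (simp add: mpow_add mpow_diff mpow_mult_Rloc mult.commute[of a] mpow_subset_Rloc[THEN subsetD])

lemma carrier_OmG [simp]: "carrier OmG = mpow 2"
  and mult_OmG [simp]: "x \<otimes>\<^bsub>OmG\<^esub> y = x + y"
  and one_OmG [simp]: "\<one>\<^bsub>OmG\<^esub> = 0"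
  by (simp_all add: OmG_def)

lemma comm_group_OmG: "comm_group (OmG :: 'k::field fps monoid)"
proof (rule comm_groupI)
  show "\<exists>y \<in> carrier OmG. y \<otimes>\<^bsub>OmG\<^esub> x = \<one>\<^bsub>OmG\<^esub>" if "x \<in> carrier OmG" for x :: "'k fps"
    using that by (intro bexI[of _ "- x"]) (simp_all add: mpow_uminus)
qed (simp_all add: mpow_add zero_in_mpow add.commute)

lemmas group_OmG = comm_group.axioms(2)[OF comm_group_OmG]

lemma inv_OmG [simp]: "x \<in> mpow 2 \<Longrightarrow> inv\<^bsub>OmG\<^esub> x = - (x :: 'k::field fps)"
  by (rule group.inv_equality[OF group_OmG]) (simp_all add: mpow_uminus)

lemma subgroup_mpow3_OmG: "subgroup (mpow 3) (OmG :: 'k::field fps monoid)"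
proof (rule group.subgroupI[OF group_OmG])
  show "mpow 3 \<subseteq> carrier (OmG :: 'k fps monoid)"
    using mpow_antimono[of 2 3] by simp
qed (use zero_in_mpow mpow_antimono[of 2 3] in \<open>auto simp: mpow_uminus mpow_add\<close>)

lemma comm_group_OmQ: "comm_group (OmQ :: 'k::field fps set monoid)"
  unfolding OmQ_def by (rule comm_group.abelian_FactGroup[OF comm_group_OmG subgroup_mpow3_OmG])

lemmas group_OmQ = comm_group.axioms(2)[OF comm_group_OmQ]

lemma omcls_hom: "omcls \<in> hom OmG (OmQ :: 'k::field fps set monoid)"
proof -
  have "mpow 3 \<lhd> (OmG :: 'k fps monoid)"
    by (rule comm_group.subgroup_imp_normal[OF comm_group_OmG subgroup_mpow3_OmG])
  then show ?thesis
    unfolding omcls_def OmQ_def by (rule normal.r_coset_hom_Mod)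
qed

lemma omcls_in_OmQ: "u \<in> mpow 2 \<Longrightarrow> omcls u \<in> carrier (OmQ :: 'k::field fps set monoid)"
  using hom_in_carrier[OF omcls_hom] by simp

lemma omcls_add:
  "u \<in> mpow 2 \<Longrightarrow> v \<in> mpow 2 \<Longrightarrow> omcls u \<otimes>\<^bsub>OmQ\<^esub> omcls v = omcls (u + v :: 'k::field fps)"
  using hom_mult[OF omcls_hom, of u v] by simp

lemma omcls_diff:
  assumes "u \<in> mpow 2" "v \<in> mpow 2"
  shows "omcls u \<otimes>\<^bsub>OmQ\<^esub> inv\<^bsub>OmQ\<^esub> omcls v = omcls (u - v :: 'k::field fps)"
proof -
  interpret omcls: group_hom OmG OmQ omcls
    by (simp add: group_hom_def group_hom_axioms_def group_OmG group_OmQ omcls_hom)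
  show ?thesis
    using assms by (simp add: omcls_add mpow_uminus flip: omcls.hom_inv)
qed

lemma omcls_eq_one_iff:
  "u \<in> mpow 2 \<Longrightarrow> omcls u = \<one>\<^bsub>OmQ\<^esub> \<longleftrightarrow> u \<in> (mpow 3 :: 'k::field fps set)"
  unfolding OmQ_def omcls_def one_FactGroup
  using group.rcos_self[OF group_OmG _ subgroup_mpow3_OmG] subgroup.rcos_const[OF subgroup_mpow3_OmG group_OmG]
  by fastforce

lemma omcls_mpow3: "u \<in> mpow 3 \<Longrightarrow> omcls u = \<one>\<^bsub>OmQ\<^esub>"
  using mpow_antimono[of 2 3] omcls_eq_one_iff[of u] by auto

lemma omcls_eqI:
  assumes "u \<in> mpow 2" "v \<in> mpow 2" "u - v \<in> mpow 3"
  shows "omcls u = omcls (v :: 'k::field fps)"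
proof -
  have "omcls (u - v) = \<one>\<^bsub>OmQ\<^esub>"
    using assms by (simp add: omcls_eq_one_iff mpow_diff)
  then have "omcls u = omcls v \<otimes>\<^bsub>OmQ\<^esub> \<one>\<^bsub>OmQ\<^esub>"
    using assms omcls_add[of v "u - v"] by (simp add: mpow_diff)
  then show ?thesis
    using assms(2) by (simp add: group.is_monoid[OF group_OmQ] monoid.r_one omcls_in_OmQ)
qed

definition rho_gen :: "'k::field fps \<times> 'k fps \<Rightarrow> 'k fps" where
  "rho_gen = (\<lambda>(a, b). if a \<in> mpow 2 then - (a * dR b) else b * dR a)"

lemma rho_gen_left: "a \<in> mpow 2 \<Longrightarrow> rho_gen (a, b) = - (a * dR b)"
  by (simp add: rho_gen_def)

lemma rho_gen_in_mpow2: "g \<in> DSgens \<Longrightarrow> rho_gen g \<in> mpow 2"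
  by (auto simp: DSgens_def rho_gen_def dR_def mpow_uminus mpow_mult_fps_deriv_Rloc
      mpow_subset_Rloc[THEN subsetD])

lemma omcls_rho_gen_right:
  assumes "a \<in> Rloc" "b \<in> mpow 2"
  shows "omcls (rho_gen (a, b)) = omcls (b * dR a)"
proof (cases "a \<in> mpow 2")
  case True
  have "- (a * dR b) - b * dR a \<in> mpow 3"
    using True assms(2) by (simp add: dR_def mpow_diff mpow_uminus mpow2_mult_fps_deriv_mpow2)
  then show ?thesis
    using True assms
    by (simp add: rho_gen_left omcls_eqI dR_def mpow_uminus mpow_mult_fps_deriv_Rloc mpow_subset_Rloc[THEN subsetD])
qed (simp add: rho_gen_def)

lemma rho_gen_skew:
  assumes "a \<in> mpow 2" "b \<in> Rloc"
  shows "rho_gen (a, b) + rho_gen (b, a) \<in> mpow 3"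
proof (cases "b \<in> mpow 2")
  case True
  then show ?thesis
    using assms by (simp add: rho_gen_def dR_def mpow_diff mpow_uminus mpow2_mult_fps_deriv_mpow2)
qed (simp add: assms rho_gen_def zero_in_mpow mult.commute)

lemma rho_gen_add_left:
  assumes "a \<in> mpow 2" "b \<in> Rloc" "c \<in> Rloc"
  shows "rho_gen (a, b) + rho_gen (a, c) - rho_gen (a, b + c - a * b * c) \<in> mpow 3"
proof -
  have eq: "rho_gen (a, b) + rho_gen (a, c) - rho_gen (a, b + c - a * b * c)
      = - (a * fps_deriv (a * (b * c)))"
    using assms(1) by (simp add: rho_gen_def dR_def algebra_simps)
  have "a * (b * c) \<in> mpow 2"
    using assms by (simp add: mpow_mult_Rloc Rloc_mult)
  then have "- (a * fps_deriv (a * (b * c))) \<in> mpow 3"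
    using assms(1) by (simp add: mpow_uminus mpow2_mult_fps_deriv_mpow2 del: fps_deriv_mult)
  with eq show ?thesis
    by (simp only:)
qed

lemma rho_gen_add_right:
  assumes "a \<in> Rloc" "b \<in> mpow 2" "c \<in> mpow 2"
  shows "rho_gen (a, b) + rho_gen (a, c) - rho_gen (a, b + c - a * b * c) \<in> mpow 3"
proof (cases "a \<in> mpow 2")
  case True
  then show ?thesis
    using assms rho_gen_add_left mpow_subset_Rloc by blast
next
  case False
  have "rho_gen (a, b) + rho_gen (a, c) - rho_gen (a, b + c - a * b * c) = (b * c) * (a * fps_deriv a)"
    using False by (simp add: rho_gen_def dR_def algebra_simps)
  moreover have "b * c \<in> mpow (2 + 2)"
    using assms(2,3) by (rule mpow_mult)
  ultimately show ?thesis
    using assms(1) mpow_antimono[of 3 "2 + 2"]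
    by (auto simp: mpow_mult_Rloc Rloc_mult fps_deriv_in_Rloc)
qed

lemma rho_gen_leibniz:
  assumes "a \<in> mpow 2" "b \<in> Rloc" "c \<in> Rloc"
  shows "rho_gen (a, b * c) - rho_gen (a * b, c) - rho_gen (a * c, b) = 0"
  using assms by (simp add: rho_gen_def dR_def mpow_mult_Rloc algebra_simps)

lemma comm_group_FK: "comm_group FK"
  unfolding FK_def by (rule abelian_free_Abelian_group)

lemma frag_of_in_FK: "frag_of g \<in> carrier FK \<longleftrightarrow> g \<in> DSgens"
  by (simp add: FK_def)

lemma FK_add_closed: "x \<in> carrier FK \<Longrightarrow> y \<in> carrier FK \<Longrightarrow> x + y \<in> carrier FK"
  using keys_add[of x y] by (auto simp: FK_def)

lemma FK_diff_closed: "x \<in> carrier FK \<Longrightarrow> y \<in> carrier FK \<Longrightarrow> x - y \<in> carrier FK"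
  using keys_diff[of x y] by (auto simp: FK_def)

lemma DSrels_subset_carrier: "DSrels \<subseteq> carrier (FK :: ('k::field fps \<times> 'k fps \<Rightarrow>\<^sub>0 int) monoid)"
proof
  fix r :: "'k fps \<times> 'k fps \<Rightarrow>\<^sub>0 int"
  assume "r \<in> DSrels"
  then show "r \<in> carrier FK"
    unfolding DSrels_def
    by (auto intro!: FK_add_closed FK_diff_closed simp: frag_of_in_FK DSgens_def Rloc_mult mpow_mult_Rloc
        Rloc_dennis_stein_sum mpow_dennis_stein_sum mpow_subset_Rloc[THEN subsetD])
qed

lemma hom_FK_frag_combinations:
  fixes h :: "('k::field fps \<times> 'k fps \<Rightarrow>\<^sub>0 int) \<Rightarrow> 'k fps set"
  assumes h: "h \<in> hom FK OmQ"
    and h_gen: "\<And>g. g \<in> DSgens \<Longrightarrow> h (frag_of g) = omcls (rho_gen g)"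
  shows "\<lbrakk>p \<in> DSgens; q \<in> DSgens\<rbrakk>
      \<Longrightarrow> h (frag_of p + frag_of q) = omcls (rho_gen p + rho_gen q)"
    and "\<lbrakk>p \<in> DSgens; q \<in> DSgens; s \<in> DSgens\<rbrakk>
      \<Longrightarrow> h (frag_of p + frag_of q - frag_of s) = omcls (rho_gen p + rho_gen q - rho_gen s)"
    and "\<lbrakk>p \<in> DSgens; q \<in> DSgens; s \<in> DSgens\<rbrakk>
      \<Longrightarrow> h (frag_of p - frag_of q - frag_of s) = omcls (rho_gen p - rho_gen q - rho_gen s)"
proof -
  interpret h: group_hom FK OmQ h
    using h by (simp add: group_hom_def group_hom_axioms_def group_OmQ FK_def)
  have h_add: "h (x + y) = h x \<otimes>\<^bsub>OmQ\<^esub> h y" if "x \<in> carrier FK" "y \<in> carrier FK" for x y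
    using h.hom_mult[OF that] by (simp add: FK_def)
  have h_diff: "h (x - y) = h x \<otimes>\<^bsub>OmQ\<^esub> inv\<^bsub>OmQ\<^esub> h y" if "x \<in> carrier FK" "y \<in> carrier FK" for x y
    using h.hom_mult[OF that(1) h.G.inv_closed[OF that(2)]] h.hom_inv[OF that(2)] that
    by (simp add: FK_def)
  have h_frag: "h (frag_of g) = omcls (rho_gen g)" "frag_of g \<in> carrier FK" "rho_gen g \<in> mpow 2"
    if "g \<in> DSgens" for g
    using that h_gen rho_gen_in_mpow2 by (simp_all add: frag_of_in_FK)
  show "h (frag_of p + frag_of q) = omcls (rho_gen p + rho_gen q)"
    if "p \<in> DSgens" "q \<in> DSgens"
    using that by (simp add: h_add h_frag omcls_add)
  show "h (frag_of p + frag_of q - frag_of s) = omcls (rho_gen p + rho_gen q - rho_gen s)"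
    if "p \<in> DSgens" "q \<in> DSgens" "s \<in> DSgens"
    using that by (simp add: h_add h_diff h_frag FK_add_closed omcls_add omcls_diff mpow_add)
  show "h (frag_of p - frag_of q - frag_of s) = omcls (rho_gen p - rho_gen q - rho_gen s)"
    if "p \<in> DSgens" "q \<in> DSgens" "s \<in> DSgens"
    using that by (simp add: h_diff h_frag FK_diff_closed omcls_diff mpow_diff)
qed

lemma DSrels_subset_kernel:
  fixes h :: "('k::field fps \<times> 'k fps \<Rightarrow>\<^sub>0 int) \<Rightarrow> 'k fps set"
  assumes h: "h \<in> hom FK OmQ"
    and h_gen: "\<And>g. g \<in> DSgens \<Longrightarrow> h (frag_of g) = omcls (rho_gen g)"
  shows "DSrels \<subseteq> kernel FK OmQ h"
proof
  note combination = hom_FK_frag_combinations[OF h h_gen]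
  fix r :: "'k fps \<times> 'k fps \<Rightarrow>\<^sub>0 int"
  assume r: "r \<in> DSrels"
  from r consider
      (skew) a b where "r = frag_of (a, b) + frag_of (b, a)" "a \<in> mpow 2" "b \<in> Rloc"
    | (add) a b c where "r = frag_of (a, b) + frag_of (a, c) - frag_of (a, b + c - a * b * c)"
        "(a \<in> mpow 2 \<and> b \<in> Rloc \<and> c \<in> Rloc) \<or> (a \<in> Rloc \<and> b \<in> mpow 2 \<and> c \<in> mpow 2)"
    | (leibniz) a b c where "r = frag_of (a, b * c) - frag_of (a * b, c) - frag_of (a * c, b)"
        "a \<in> mpow 2" "b \<in> Rloc" "c \<in> Rloc"
    unfolding DSrels_def by blast
  then have "h r = \<one>\<^bsub>OmQ\<^esub>"
  proof cases
    case skew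
    then have "(a, b) \<in> DSgens" "(b, a) \<in> DSgens"
      by (auto simp: DSgens_def mpow_subset_Rloc[THEN subsetD])
    then show ?thesis
      using skew by (simp add: combination(1) omcls_mpow3 rho_gen_skew)
  next
    case add
    then have "(a, b) \<in> DSgens" "(a, c) \<in> DSgens" "(a, b + c - a * b * c) \<in> DSgens"
      by (auto simp: DSgens_def mpow_subset_Rloc[THEN subsetD] Rloc_dennis_stein_sum mpow_dennis_stein_sum)
    moreover have "rho_gen (a, b) + rho_gen (a, c) - rho_gen (a, b + c - a * b * c) \<in> mpow 3"
      using add rho_gen_add_left rho_gen_add_right by blast
    ultimately show ?thesis
      using add by (simp add: combination(2) omcls_mpow3)
  next
    case leibniz
    then have "(a, b * c) \<in> DSgens" "(a * b, c) \<in> DSgens" "(a * c, b) \<in> DSgens"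
      by (auto simp: DSgens_def mpow_mult_Rloc Rloc_mult)
    then show ?thesis
      using leibniz by (simp add: combination(3) rho_gen_leibniz omcls_mpow3 zero_in_mpow)
  qed
  then show "r \<in> kernel FK OmQ h"
    using r DSrels_subset_carrier by (auto simp: kernel_def)
qed

lemma K2rel_hom_exists:
  obtains \<rho> where "\<rho> \<in> hom K2rel (OmQ :: 'k::field fps set monoid)"
    "\<And>a b. (a, b) \<in> DSgens \<Longrightarrow> \<rho> (DS a b) = omcls (rho_gen (a, b))"
proof -
  have gens: "(omcls \<circ> rho_gen) ` DSgens \<subseteq> carrier (OmQ :: 'k fps set monoid)"
    by (auto simp: omcls_in_OmQ rho_gen_in_mpow2)
  obtain h where h: "h \<in> hom FK (OmQ :: 'k fps set monoid)"
    and h_gen: "\<And>g. g \<in> DSgens \<Longrightarrow> h (frag_of g) = omcls (rho_gen g)"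
    using comm_group.free_Abelian_group_universal[OF comm_group_OmQ gens] unfolding FK_def comp_def
    by metis
  interpret h: group_hom FK OmQ h
    using h by (simp add: group_hom_def group_hom_axioms_def group_OmQ FK_def)
  have rels: "subgroup (generate FK DSrels) (FK :: ('k fps \<times> 'k fps \<Rightarrow>\<^sub>0 int) monoid)"
    by (rule h.G.generate_is_subgroup[OF DSrels_subset_carrier])
  have "generate FK DSrels \<lhd> (FK :: ('k fps \<times> 'k fps \<Rightarrow>\<^sub>0 int) monoid)"
    using comm_group.subgroup_imp_normal[OF comm_group_FK rels] .
  moreover have "generate FK DSrels \<subseteq> kernel FK OmQ h"
    using h.G.generate_subgroup_incl[OF DSrels_subset_kernel[OF h h_gen] h.subgroup_kernel] .
  ultimately obtain \<rho> where \<rho>: "\<rho> \<in> hom K2rel OmQ"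
    and \<rho>_coset: "\<And>x. x \<in> carrier FK \<Longrightarrow> \<rho> (generate FK DSrels #>\<^bsub>FK\<^esub> x) = h x"
    using h.FactGroup_universal_kernel unfolding K2rel_def by blast
  show thesis
    using \<rho> by (rule that) (simp add: DS_def \<rho>_coset h_gen frag_of_in_FK)
qed

lemma omcls_uminus_fps_X_power2_ne_one: "omcls (- (fps_X ^ 2 :: 'k::field fps)) \<noteq> \<one>\<^bsub>OmQ\<^esub>"
proof -
  have "(- (fps_X ^ 2) :: 'k fps) $ 2 \<noteq> 0"
    by simp
  then have "- (fps_X ^ 2 :: 'k fps) \<notin> mpow 3"
    using fps_nth_mpow[of _ 3 2] by fastforce
  then show ?thesis
    by (simp add: omcls_eq_one_iff mpow_uminus fps_X_power_in_mpow)
qed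

theorem proposition2p3:
  fixes k_type :: "'k::field itself"
  assumes "(2::'k) \<noteq> 0"
  shows "\<exists>\<rho>. \<rho> \<in> hom (K2rel :: ('k fps \<times> 'k fps \<Rightarrow>\<^sub>0 int) set monoid) OmQ
          \<and> (\<forall>a b. a \<in> mpow 2 \<and> b \<in> Rloc \<longrightarrow> \<rho> (DS a b) = omcls (- (a * dR b)))
          \<and> (\<forall>a b. a \<in> Rloc \<and> b \<in> mpow 2 \<longrightarrow> \<rho> (DS a b) = omcls (b * dR a))
          \<and> \<rho> (DS (fps_X ^ 2) fps_X) = omcls (- (fps_X ^ 2 * dR fps_X))
          \<and> omcls (- (fps_X ^ 2 * dR (fps_X :: 'k fps))) = omcls (- (fps_X ^ 2))
          \<and> omcls (- (fps_X ^ 2 :: 'k fps)) \<noteq> \<one>\<^bsub>OmQ\<^esub>"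
proof -
  obtain \<rho> where hom: "\<rho> \<in> hom K2rel (OmQ :: 'k fps set monoid)"
    and \<rho>_gen: "\<And>a b. (a, b) \<in> DSgens \<Longrightarrow> \<rho> (DS a b) = omcls (rho_gen (a, b))"
    using K2rel_hom_exists[where 'k = 'k] by blast
  have left: "\<rho> (DS a b) = omcls (- (a * dR b))" if "a \<in> mpow 2" "b \<in> Rloc" for a b
    using that by (simp add: \<rho>_gen DSgens_def rho_gen_left)
  have right: "\<rho> (DS a b) = omcls (b * dR a)" if "a \<in> Rloc" "b \<in> mpow 2" for a b
    using that by (simp add: \<rho>_gen DSgens_def omcls_rho_gen_right)
  show ?thesis
    using hom left right left[OF fps_X_power_in_mpow fps_X_in_Rloc] omcls_uminus_fps_X_power2_ne_one
    by (auto simp: dR_def)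
qed

end
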